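(* Let $\Gamma=(Q,A,E,(\delta_e)_{e\in E})$ be an MEMDP, $e\ne e'\in E$ and $b\in\mathcal D(E)$. For $n\in\mathbb N$ let $\mathrm{Reveal}^n(\Gamma,b,e',e)$ be the set of infinite runs having a finite prefix $\rho\in Q\cdot(A\cdot Q)^*$ with $\mathrm{nb}_{\mathrm{rev}}(e',e,\rho)\ge n$ and $\mathrm{lk}_b(\rho)(e')\ne0$. Then for every $n\in\mathbb N$, every $q\in Q$ and every strategy $\sigma$, $$\mathbb P^\sigma_q[\Gamma[e],\mathrm{Reveal}^n(\Gamma,b,e',e)]\le(1-p_{\min}(\Gamma))^n.$$
   Context: An MEMDP is $\Gamma=(Q,A,E,(\delta_e)_{e\in E})$ with $Q,A,E$ finite non-empty and each $\Gamma[e]=(Q,A,\delta_e)$ an MDP; strategies are maps $Q\cdot(A\cdot Q)^*\to\mathcal D(A)$ and $\mathbb P^\sigma_q[\Gamma[e],\cdot]$ is the induced measure on infinite runs from $q$. Belief update: $p[b,q,a](q'):=\sum_f b(f)\delta_f(q,a)(q')$; if positive, $\lambda[b,q,a,q'](f):=b(f)\delta_f(q,a)(q')/p[b,q,a](q')$ (arbitrary otherwise); $\mathrm{lk}_b(q):=b$, $\mathrm{lk}_b(\rho\cdot(a,q')):=\lambda[\mathrm{lk}_b(\rho),\mathrm{last}(\rho),a,q']$. A pair $(q,a)$ is $e'/e$-revealing if some $q'$ has $\delta_{e'}(q,a)(q')=0<\delta_e(q,a)(q')$. For $\rho=q_0(a_1,q_1)\cdots(a_n,q_n)$, $\mathrm{nb}_{\mathrm{rev}}(e',e,\rho)$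 is the number of $i$ with $(q_{i-1},a_i)$ $e'/e$-revealing. $p_{\min}(\Gamma)=\min\{\delta_f(q,a)(q'): f\in E,\ \delta_f(q,a)(q')>0\}$.
   Formalization: The prior belief b is assumed to give e positive probability, $b(e)>0$. The statement above fails without it. *)

theory Defs
  imports "HOL-Probability.Probability"
begin

(* An MEMDP over finite types 'q (states), 'a (actions), 'e (environments) is given by
   delta :: 'e => 'q => 'a => 'q pmf ; Gamma[e] is the MDP with transition function delta e.
   A strategy is a map from histories Q.(A.Q)^* to D(A); a history q0 (a1,q1)...(an,qn)
   is represented by the pair (q0, [(a1,q1),...,(an,qn)]).
   An infinite run from q is q followed by a stream of (action,state) pairs. *)

type_synonym ('q,'a,'e) memdp = "'e \<Rightarrow> 'q \<Rightarrow> 'a \<Rightarrow> 'q pmf"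
type_synonym ('q,'a) strategy = "'q \<Rightarrow> ('a \<times> 'q) list \<Rightarrow> 'a pmf"

(* probability of the cylinder of a finite history in Gamma[e] under sigma:
   h = history so far (after q0), c = current state, remaining steps xs *)
fun path_prob :: "('q,'a,'e) memdp \<Rightarrow> 'e \<Rightarrow> ('q,'a) strategy \<Rightarrow> 'q \<Rightarrow>
                   ('a \<times> 'q) list \<Rightarrow> 'q \<Rightarrow> ('a \<times> 'q) list \<Rightarrow> real" where
  "path_prob \<delta> e \<sigma> q0 h c [] = 1"
| "path_prob \<delta> e \<sigma> q0 h c ((a, q') # xs) =
     pmf (\<sigma> q0 h) a * pmf (\<delta> e c a) q' * path_prob \<delta> e \<sigma> q0 (h @ [(a, q')]) q' xs"

(* M is the measure P^sigma_q[Gamma[e], -] on infinite runs from q (runs q.(A.Q)^omega,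
   represented by their tail stream): the unique probability measure on the product
   sigma-algebra whose cylinder probabilities are the products of strategy and
   transition probabilities. *)
definition is_run_measure ::
  "('q,'a,'e) memdp \<Rightarrow> 'e \<Rightarrow> ('q,'a) strategy \<Rightarrow> 'q \<Rightarrow> ('a \<times> 'q) stream measure \<Rightarrow> bool" where
  "is_run_measure \<delta> e \<sigma> q M \<longleftrightarrow>
     sets M = sets (stream_space (count_space UNIV)) \<and> prob_space M \<and>
     (\<forall>xs. emeasure M {\<omega> \<in> space M. stake (length xs) \<omega> = xs}
             = ennreal (path_prob \<delta> e \<sigma> q [] q xs))"

definition bel_p :: "('q,'a,'e::finite) memdp \<Rightarrow> ('e \<Rightarrow> real) \<Rightarrow> 'q \<Rightarrow> 'a \<Rightarrow> 'q \<Rightarrow> real" where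
  "bel_p \<delta> b q a q' = (\<Sum>f\<in>UNIV. b f * pmf (\<delta> f q a) q')"

(* lambda[b,q,a,q']; fb is the (arbitrary) choice of a distribution used when p = 0 *)
definition bel_upd :: "('q,'a,'e::finite) memdp \<Rightarrow> (('e \<Rightarrow> real) \<Rightarrow> 'q \<Rightarrow> 'a \<Rightarrow> 'q \<Rightarrow> 'e pmf) \<Rightarrow>
                       ('e \<Rightarrow> real) \<Rightarrow> 'q \<Rightarrow> 'a \<Rightarrow> 'q \<Rightarrow> ('e \<Rightarrow> real)" where
  "bel_upd \<delta> fb b q a q' =
     (if bel_p \<delta> b q a q' > 0
      then (\<lambda>f. b f * pmf (\<delta> f q a) q' / bel_p \<delta> b q a q')
      else pmf (fb b q a q'))"

fun lk :: "('q,'a,'e::finite) memdp \<Rightarrow> (('e \<Rightarrow> real) \<Rightarrow> 'q \<Rightarrow> 'a \<Rightarrow> 'q \<Rightarrow> 'e pmf) \<Rightarrow>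
           ('e \<Rightarrow> real) \<Rightarrow> 'q \<Rightarrow> ('a \<times> 'q) list \<Rightarrow> ('e \<Rightarrow> real)" where
  "lk \<delta> fb b q0 [] = b"
| "lk \<delta> fb b q0 ((a, q') # xs) = lk \<delta> fb (bel_upd \<delta> fb b q0 a q') q' xs"

definition revealing :: "('q,'a,'e) memdp \<Rightarrow> 'e \<Rightarrow> 'e \<Rightarrow> 'q \<Rightarrow> 'a \<Rightarrow> bool" where
  "revealing \<delta> e' e q a \<longleftrightarrow> (\<exists>q'. pmf (\<delta> e' q a) q' = 0 \<and> 0 < pmf (\<delta> e q a) q')"

fun nb_rev :: "('q,'a,'e) memdp \<Rightarrow> 'e \<Rightarrow> 'e \<Rightarrow> 'q \<Rightarrow> ('a \<times> 'q) list \<Rightarrow> nat" where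
  "nb_rev \<delta> e' e q0 [] = 0"
| "nb_rev \<delta> e' e q0 ((a, q') # xs) = (if revealing \<delta> e' e q0 a then 1 else 0) + nb_rev \<delta> e' e q' xs"

definition p_min :: "('q,'a,'e) memdp \<Rightarrow> real" where
  "p_min \<delta> = Min {pmf (\<delta> f q a) q' | f q a q'. pmf (\<delta> f q a) q' > 0}"

definition Reveal :: "('q,'a,'e::finite) memdp \<Rightarrow> (('e \<Rightarrow> real) \<Rightarrow> 'q \<Rightarrow> 'a \<Rightarrow> 'q \<Rightarrow> 'e pmf) \<Rightarrow>
                      nat \<Rightarrow> 'e pmf \<Rightarrow> 'e \<Rightarrow> 'e \<Rightarrow> 'q \<Rightarrow> ('a \<times> 'q) stream set" where
  "Reveal \<delta> fb n b e' e q0 =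
     {\<omega>. \<exists>k. nb_rev \<delta> e' e q0 (stake k \<omega>) \<ge> n \<and> lk \<delta> fb (pmf b) q0 (stake k \<omega>) e' \<noteq> 0}"

end

theory Submission
  imports Defs
begin

(* Almost surely every prefix of a run has positive probability under e. Since b(e) > 0, along
   such a prefix rho the belief is given by Bayes' rule, so a non-zero lk_b(rho)(e') forces every
   transition of rho to be possible in e'. Hence almost every run in Reveal^n has a prefix that
   is possible in e' and contains n e'/e-revealing steps. At a revealing pair the e-transition
   leaves the e'-possible successors with probability at least p_min, so by induction on K the
   probability of such a prefix among the first K steps is at most (1 - p_min)^n; these events
   increase with K, and the bound passes to their union. *)

fun feasible :: "('q,'a,'e) memdp \<Rightarrow> 'e \<Rightarrow> 'q \<Rightarrow> ('a \<times> 'q) list \<Rightarrow> bool" where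
  "feasible \<delta> e c [] \<longleftrightarrow> True"
| "feasible \<delta> e c ((a, q') # xs) \<longleftrightarrow> 0 < pmf (\<delta> e c a) q' \<and> feasible \<delta> e q' xs"

definition feasibly_reveals ::
  "('q,'a,'e) memdp \<Rightarrow> 'e \<Rightarrow> 'e \<Rightarrow> nat \<Rightarrow> 'q \<Rightarrow> ('a \<times> 'q) list \<Rightarrow> bool" where
  "feasibly_reveals \<delta> e' e n c xs \<longleftrightarrow>
     (\<exists>k \<le> length xs. n \<le> nb_rev \<delta> e' e c (take k xs) \<and> feasible \<delta> e' c (take k xs))"

lemma feasibly_reveals_0: "feasibly_reveals \<delta> e' e 0 c xs"
  by (auto simp: feasibly_reveals_def)

lemma feasibly_reveals_Nil: "feasibly_reveals \<delta> e' e n c [] \<longleftrightarrow> n = 0"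
  by (simp add: feasibly_reveals_def)

lemma feasibly_reveals_Cons:
  "feasibly_reveals \<delta> e' e (Suc m) c ((a, q') # ys) \<longleftrightarrow>
     0 < pmf (\<delta> e' c a) q' \<and>
     feasibly_reveals \<delta> e' e (if revealing \<delta> e' e c a then m else Suc m) q' ys"
proof -
  have ex_le_Suc: "(\<exists>k \<le> Suc l. P k) \<longleftrightarrow> P 0 \<or> (\<exists>k \<le> l. P (Suc k))" for P l
    by (metis Suc_le_mono le0 not0_implies_Suc)
  show ?thesis
    unfolding feasibly_reveals_def length_Cons ex_le_Suc by auto
qed

lemma feasibly_reveals_append:
  assumes "feasibly_reveals \<delta> e' e n c xs"
  shows "feasibly_reveals \<delta> e' e n c (xs @ ys)"
proof -
  obtain k where "k \<le> length xs" "n \<le> nb_rev \<delta> e' e c (take k xs)" "feasible \<delta> e' c (take k xs)"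
    using assms by (auto simp: feasibly_reveals_def)
  then show ?thesis
    unfolding feasibly_reveals_def by (intro exI[of _ k]) auto
qed

lemma sum_lists_length_Suc:
  fixes f :: "'b::finite list \<Rightarrow> 'c::comm_monoid_add"
  shows "(\<Sum>xs | length xs = Suc K. f xs) = (\<Sum>x\<in>UNIV. \<Sum>ys | length ys = K. f (x # ys))"
proof -
  have "{xs :: 'b list. length xs = Suc K} = (\<lambda>(ys, x). x # ys) ` ({ys. length ys = K} \<times> UNIV)"
    using lists_length_Suc_eq[of UNIV K] by simp
  then have "(\<Sum>xs | length xs = Suc K. f xs) = (\<Sum>(ys, x) \<in> {ys. length ys = K} \<times> UNIV. f (x # ys))"
    by (simp only: sum.reindex[OF inj_split_Cons]) (simp add: comp_def case_prod_unfold)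
  also have "\<dots> = (\<Sum>x\<in>UNIV. \<Sum>ys | length ys = K. f (x # ys))"
    by (simp add: sum.cartesian_product[symmetric] sum.swap[of _ UNIV])
  finally show ?thesis .
qed

lemma finite_lists_length_UNIV: "finite {xs :: 'b::finite list. length xs = K}"
  using finite_lists_length_eq[of "UNIV :: 'b set" K] by simp

lemma sum_pmf_mult_le:
  fixes P :: "'b::finite pmf"
  assumes "\<And>x. f x \<le> B"
  shows "(\<Sum>x\<in>UNIV. pmf P x * f x) \<le> B"
proof -
  have "(\<Sum>x\<in>UNIV. pmf P x * f x) \<le> (\<Sum>x\<in>UNIV. pmf P x * B)"
    by (intro sum_mono mult_left_mono assms) simp
  also have "\<dots> = B"
    by (simp add: sum_distrib_right[symmetric] sum_pmf_eq_1)
  finally show ?thesis .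
qed

lemma sum_pmf_mult_le_avoiding:
  fixes P :: "'b::finite pmf"
  assumes "f y = 0" and "\<And>x. f x \<le> B"
  shows "(\<Sum>x\<in>UNIV. pmf P x * f x) \<le> (1 - pmf P y) * B"
proof -
  have "(\<Sum>x\<in>UNIV. pmf P x * f x) \<le> (\<Sum>x\<in>UNIV. pmf P x * (B - (if x = y then B else 0)))"
    using assms by (intro sum_mono mult_left_mono) auto
  also have "\<dots> = (1 - pmf P y) * B"
    by (simp add: right_diff_distrib sum_subtractf sum_distrib_right[symmetric] sum_pmf_eq_1
        left_diff_distrib if_distrib[of "\<lambda>x. _ * x"] cong: if_cong)
  finally show ?thesis .
qed

lemma path_prob_nonneg: "0 \<le> path_prob \<delta> e \<sigma> q0 h c xs"
  by (induction xs arbitrary: h c) auto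

lemma sum_path_prob_Suc:
  fixes \<delta> :: "('q::finite,'a::finite,'e) memdp"
  shows "(\<Sum>xs | length xs = Suc K. f xs * path_prob \<delta> e \<sigma> q0 h c xs) =
    (\<Sum>a\<in>UNIV. pmf (\<sigma> q0 h) a * (\<Sum>q'\<in>UNIV. pmf (\<delta> e c a) q' *
       (\<Sum>ys | length ys = K. f ((a, q') # ys) * path_prob \<delta> e \<sigma> q0 (h @ [(a, q')]) q' ys)))"
proof -
  have "(\<Sum>xs | length xs = Suc K. f xs * path_prob \<delta> e \<sigma> q0 h c xs) =
    (\<Sum>x \<in> UNIV \<times> UNIV. \<Sum>ys | length ys = K. f (x # ys) * path_prob \<delta> e \<sigma> q0 h c (x # ys))"
    by (simp only: sum_lists_length_Suc UNIV_Times_UNIV)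
  also have "\<dots> = (\<Sum>a\<in>UNIV. \<Sum>q'\<in>UNIV. \<Sum>ys | length ys = K.
      f ((a, q') # ys) * path_prob \<delta> e \<sigma> q0 h c ((a, q') # ys))"
    by (rule sum.cartesian_product')
  also have "\<dots> = (\<Sum>a\<in>UNIV. \<Sum>q'\<in>UNIV. \<Sum>ys | length ys = K.
      pmf (\<sigma> q0 h) a * (pmf (\<delta> e c a) q' *
        (f ((a, q') # ys) * path_prob \<delta> e \<sigma> q0 (h @ [(a, q')]) q' ys)))"
    by (intro sum.cong refl) (simp add: ac_simps)
  finally show ?thesis
    by (simp only: sum_distrib_left)
qed

lemma sum_path_prob:
  fixes \<delta> :: "('q::finite,'a::finite,'e) memdp"
  shows "(\<Sum>xs | length xs = K. path_prob \<delta> e \<sigma> q0 h c xs) = 1"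
proof (induction K arbitrary: h c)
  case 0
  then show ?case by simp
next
  case (Suc K)
  have "(\<Sum>xs | length xs = Suc K. path_prob \<delta> e \<sigma> q0 h c xs) =
        (\<Sum>xs | length xs = Suc K. 1 * path_prob \<delta> e \<sigma> q0 h c xs)"
    by simp
  also have "\<dots> = 1"
    unfolding sum_path_prob_Suc by (simp add: Suc.IH sum_pmf_eq_1)
  finally show ?case .
qed

lemma feasible_if_path_prob_pos:
  "0 < path_prob \<delta> e \<sigma> q0 h c xs \<Longrightarrow> feasible \<delta> e c xs"
proof (induction xs arbitrary: h c)
  case (Cons x xs)
  obtain a q' where x: "x = (a, q')" by (cases x)
  have "0 < pmf (\<sigma> q0 h) a * pmf (\<delta> e c a) q' * path_prob \<delta> e \<sigma> q0 (h @ [(a, q')]) q' xs"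
    using Cons.prems x by simp
  then have "pmf (\<delta> e c a) q' \<noteq> 0" "path_prob \<delta> e \<sigma> q0 (h @ [(a, q')]) q' xs \<noteq> 0"
    by auto
  then have "0 < pmf (\<delta> e c a) q'" "0 < path_prob \<delta> e \<sigma> q0 (h @ [(a, q')]) q' xs"
    using path_prob_nonneg[of \<delta> e \<sigma> q0 "h @ [(a, q')]" q' xs] by (simp_all add: less_le)
  then show ?case using Cons.IH x by simp
qed simp

lemma sum_path_prob_feasibly_reveals_le:
  fixes \<delta> :: "('q::finite,'a::finite,'e) memdp"
  assumes "p \<le> 1"
    and reveal: "\<And>c a. revealing \<delta> e' e c a \<Longrightarrow> \<exists>q'. pmf (\<delta> e' c a) q' = 0 \<and> p \<le> pmf (\<delta> e c a) q'"
  shows "(\<Sum>xs | length xs = K. of_bool (feasibly_reveals \<delta> e' e n c xs) * path_prob \<delta> e \<sigma> q0 h c xs)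
           \<le> (1 - p) ^ n"
proof (induction K arbitrary: h c n)
  case 0
  then show ?case using \<open>p \<le> 1\<close> by (simp add: feasibly_reveals_Nil)
next
  case (Suc K)
  note IH = Suc.IH
  show ?case
  proof (cases n)
    case 0
    then show ?thesis by (simp add: feasibly_reveals_0 sum_path_prob)
  next
    case (Suc m)
    define W where "W a q' =
      (\<Sum>ys | length ys = K. of_bool (feasibly_reveals \<delta> e' e n c ((a, q') # ys)) *
         path_prob \<delta> e \<sigma> q0 (h @ [(a, q')]) q' ys)" for a q'
    have W_le: "W a q' \<le> (1 - p) ^ (if revealing \<delta> e' e c a then m else n)" for a q'
      using IH[where h = "h @ [(a, q')]" and c = q' and n = "if revealing \<delta> e' e c a then m else n"]
        \<open>p \<le> 1\<close> \<open>n = Suc m\<close>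
      by (cases "0 < pmf (\<delta> e' c a) q'"; cases "revealing \<delta> e' e c a")
        (simp_all add: W_def feasibly_reveals_Cons)
    have W_0: "pmf (\<delta> e' c a) q' = 0 \<Longrightarrow> W a q' = 0" for a q'
      using \<open>n = Suc m\<close> by (simp add: W_def feasibly_reveals_Cons)
    have "(\<Sum>q'\<in>UNIV. pmf (\<delta> e c a) q' * W a q') \<le> (1 - p) ^ n" for a
    proof (cases "revealing \<delta> e' e c a")
      case True
      \<comment> \<open>with probability at least \<open>p\<close> the step reaches a state \<open>qs\<close> impossible in \<open>e'\<close>,
         where \<open>W\<close> vanishes\<close>
      then obtain qs where qs: "pmf (\<delta> e' c a) qs = 0" "p \<le> pmf (\<delta> e c a) qs"
        using reveal by blast
      have "(\<Sum>q'\<in>UNIV. pmf (\<delta> e c a) q' * W a q') \<le> (1 - pmf (\<delta> e c a) qs) * (1 - p) ^ m"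
        using W_le[of a] W_0[OF qs(1)] True by (intro sum_pmf_mult_le_avoiding) auto
      also have "\<dots> \<le> (1 - p) * (1 - p) ^ m"
        using qs(2) \<open>p \<le> 1\<close> by (intro mult_right_mono) auto
      finally show ?thesis using \<open>n = Suc m\<close> by simp
    next
      case False
      then show ?thesis using W_le[of a] by (intro sum_pmf_mult_le) auto
    qed
    then have "(\<Sum>a\<in>UNIV. pmf (\<sigma> q0 h) a * (\<Sum>q'\<in>UNIV. pmf (\<delta> e c a) q' * W a q')) \<le> (1 - p) ^ n"
      by (rule sum_pmf_mult_le)
    then show ?thesis
      unfolding sum_path_prob_Suc W_def .
  qed
qed

lemma bel_p_pos:
  fixes \<delta> :: "('q,'a,'e::finite) memdp"
  assumes "\<And>f. 0 \<le> \<beta> f" and "0 < \<beta> e" and "0 < pmf (\<delta> e c a) q'"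
  shows "0 < bel_p \<delta> \<beta> c a q'"
proof -
  have "\<beta> e * pmf (\<delta> e c a) q' \<le> bel_p \<delta> \<beta> c a q'"
    unfolding bel_p_def by (rule member_le_sum) (auto simp: assms(1))
  moreover have "0 < \<beta> e * pmf (\<delta> e c a) q'"
    using assms(2,3) by simp
  ultimately show ?thesis by linarith
qed

lemma lk_nonzero_imp_feasible:
  fixes \<delta> :: "('q,'a,'e::finite) memdp"
  assumes "\<And>f. 0 \<le> \<beta> f" and "0 < \<beta> e" and "feasible \<delta> e c xs" and "lk \<delta> fb \<beta> c xs e' \<noteq> 0"
  shows "\<beta> e' \<noteq> 0 \<and> feasible \<delta> e' c xs"
  using assms
proof (induction xs arbitrary: \<beta> c)
  case (Cons x xs)
  obtain a q' where x: "x = (a, q')" by (cases x)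
  have \<delta>e: "0 < pmf (\<delta> e c a) q'"
    using Cons.prems(3) x by simp
  have p: "0 < bel_p \<delta> \<beta> c a q'"
    using Cons.prems(1,2) \<delta>e by (rule bel_p_pos)
  define \<beta>' where "\<beta>' f = \<beta> f * pmf (\<delta> f c a) q' / bel_p \<delta> \<beta> c a q'" for f
  have upd: "bel_upd \<delta> fb \<beta> c a q' = \<beta>'"
    using p by (simp add: bel_upd_def \<beta>'_def fun_eq_iff)
  have "\<beta>' e' \<noteq> 0 \<and> feasible \<delta> e' q' xs"
  proof (rule Cons.IH)
    show "0 \<le> \<beta>' f" for f using p Cons.prems(1)[of f] by (simp add: \<beta>'_def)
    show "0 < \<beta>' e" using p Cons.prems(2) \<delta>e by (simp add: \<beta>'_def)
    show "feasible \<delta> e q' xs" using Cons.prems(3) x by simp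
    show "lk \<delta> fb \<beta>' q' xs e' \<noteq> 0" using Cons.prems(4) x upd by simp
  qed
  then show ?case
    using x pmf_nonneg[of "\<delta> e' c a" q'] by (auto simp: \<beta>'_def less_le)
qed simp

lemma p_min_le:
  fixes \<delta> :: "('q::finite,'a::finite,'e::finite) memdp"
  assumes "0 < pmf (\<delta> f q a) q'"
  shows "p_min \<delta> \<le> pmf (\<delta> f q a) q'"
proof -
  have "pmf (\<delta> f q a) q' \<in> range (\<lambda>(f, q, a, q'). pmf (\<delta> f q a) q')" for f q a q'
    by (rule range_eqI[of _ _ "(f, q, a, q')"]) simp
  then have "{pmf (\<delta> f q a) q' | f q a q'. 0 < pmf (\<delta> f q a) q'} \<subseteq> range (\<lambda>(f, q, a, q'). pmf (\<delta> f q a) q')"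
    by blast
  then have "finite {pmf (\<delta> f q a) q' | f q a q'. 0 < pmf (\<delta> f q a) q'}"
    by (rule finite_subset) simp
  then show ?thesis
    unfolding p_min_def by (rule Min_le) (use assms in blast)
qed

lemma p_min_le_1:
  fixes \<delta> :: "('q::finite,'a::finite,'e::finite) memdp"
  shows "p_min \<delta> \<le> 1"
proof -
  obtain q' where "q' \<in> set_pmf (\<delta> f q a)"
    using set_pmf_not_empty by fast
  then show ?thesis
    using p_min_le[of \<delta> f q a q'] pmf_le_1[of "\<delta> f q a" q'] by (simp add: pmf_positive)
qed

lemma run_measure_space:
  "is_run_measure \<delta> e \<sigma> q M \<Longrightarrow> space M = UNIV"
  unfolding is_run_measure_def by (auto dest!: sets_eq_imp_space_eq simp: space_stream_space)

lemma run_measure_stake_event_sets: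
  fixes \<delta> :: "('q::countable,'a::countable,'e) memdp"
  assumes "is_run_measure \<delta> e \<sigma> q M"
  shows "{\<omega>. P (stake K \<omega>)} \<in> sets M"
proof -
  have "sets M = sets (stream_space (count_space UNIV))"
    using assms unfolding is_run_measure_def by blast
  then have "stake K \<in> measurable M (count_space UNIV)"
    using measurable_stake measurable_cong_sets by blast
  then have "{\<omega> \<in> space M. P (stake K \<omega>)} \<in> sets M"
    by (rule measurable_sets_Collect) simp
  then show ?thesis
    using run_measure_space[OF assms] by simp
qed

lemma measure_run_stake_event:
  fixes \<delta> :: "('q::finite,'a::finite,'e) memdp"
  assumes "is_run_measure \<delta> e \<sigma> q M"
  shows "measure M {\<omega>. P (stake K \<omega>)} =
           (\<Sum>xs | length xs = K. of_bool (P xs) * path_prob \<delta> e \<sigma> q [] q xs)"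
proof -
  let ?L = "{xs. length xs = K \<and> P xs}"
  interpret prob_space M
    using assms by (simp add: is_run_measure_def)
  have cyl: "measure M {\<omega>. stake K \<omega> = xs} = path_prob \<delta> e \<sigma> q [] q xs" if "length xs = K" for xs
    using assms that path_prob_nonneg[of \<delta> e \<sigma> q "[]" q xs] run_measure_space[OF assms]
    by (auto simp: is_run_measure_def measure_def)
  have fin: "finite ?L"
    by (rule finite_subset[OF _ finite_lists_length_UNIV[of K]]) auto
  have "{\<omega>. P (stake K \<omega>)} = (\<Union>xs\<in>?L. {\<omega>. stake K \<omega> = xs})"
    by auto
  also have "measure M \<dots> = (\<Sum>xs\<in>?L. measure M {\<omega>. stake K \<omega> = xs})"
  proof (rule measure_finite_Union[OF fin])
    show "(\<lambda>xs. {\<omega>. stake K \<omega> = xs}) ` ?L \<subseteq> sets M"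
      using run_measure_stake_event_sets[OF assms, of "\<lambda>ys. ys = _" K] by blast
  qed (auto simp: disjoint_family_on_def)
  also have "\<dots> = (\<Sum>xs\<in>?L. path_prob \<delta> e \<sigma> q [] q xs)"
    by (intro sum.cong refl) (simp add: cyl)
  also have "\<dots> = (\<Sum>xs | length xs = K. of_bool (P xs) * path_prob \<delta> e \<sigma> q [] q xs)"
    by (simp add: Collect_conj_eq finite_lists_length_UNIV)
  finally show ?thesis .
qed

lemma AE_run_path_prob_pos:
  fixes \<delta> :: "('q::finite,'a::finite,'e) memdp"
  assumes "is_run_measure \<delta> e \<sigma> q M"
  shows "AE \<omega> in M. \<forall>k. 0 < path_prob \<delta> e \<sigma> q [] q (stake k \<omega>)"
proof -
  interpret prob_space M
    using assms by (simp add: is_run_measure_def)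
  have "AE \<omega> in M. path_prob \<delta> e \<sigma> q [] q (stake k \<omega>) \<noteq> 0" for k
  proof (subst AE_iff_measurable)
    show "{\<omega> \<in> space M. \<not> path_prob \<delta> e \<sigma> q [] q (stake k \<omega>) \<noteq> 0} =
          {\<omega>. path_prob \<delta> e \<sigma> q [] q (stake k \<omega>) = 0}"
      using run_measure_space[OF assms] by simp
    show "{\<omega>. path_prob \<delta> e \<sigma> q [] q (stake k \<omega>) = 0} \<in> sets M"
      by (rule run_measure_stake_event_sets[OF assms])
    show "emeasure M {\<omega>. path_prob \<delta> e \<sigma> q [] q (stake k \<omega>) = 0} = 0"
      using measure_run_stake_event[OF assms, of "\<lambda>xs. path_prob \<delta> e \<sigma> q [] q xs = 0" k]
      by (simp add: emeasure_eq_measure sum.neutral)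
  qed
  then show ?thesis
    by (subst AE_all_countable) (auto simp: less_le path_prob_nonneg)
qed

lemma measure_eventually_feasibly_reveals_le:
  fixes \<delta> :: "('q::finite,'a::finite,'e::finite) memdp"
  assumes "is_run_measure \<delta> e \<sigma> q M"
  shows "measure M {\<omega>. \<exists>K. feasibly_reveals \<delta> e' e n q (stake K \<omega>)} \<le> (1 - p_min \<delta>) ^ n"
proof -
  interpret prob_space M
    using assms by (simp add: is_run_measure_def)
  define G where "G K = {\<omega>. feasibly_reveals \<delta> e' e n q (stake K \<omega>)}" for K
  have G_sets: "G K \<in> sets M" for K
    unfolding G_def using assms by (rule run_measure_stake_event_sets)
  have "incseq G"
  proof (rule incseq_SucI)
    show "G K \<subseteq> G (Suc K)" for K
      unfolding G_def stake_Suc by (auto intro: feasibly_reveals_append)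
  qed
  have G_le: "measure M (G K) \<le> (1 - p_min \<delta>) ^ n" for K
    unfolding G_def measure_run_stake_event[OF assms]
    by (rule sum_path_prob_feasibly_reveals_le[OF p_min_le_1]) (meson p_min_le revealing_def)
  have "{\<omega>. \<exists>K. feasibly_reveals \<delta> e' e n q (stake K \<omega>)} = (\<Union>K. G K)"
    by (auto simp: G_def)
  moreover have "measure M (\<Union>K. G K) \<le> (1 - p_min \<delta>) ^ n"
    by (rule LIMSEQ_le_const2[OF finite_Lim_measure_incseq[OF _ \<open>incseq G\<close>]])
      (use G_sets G_le in auto)
  ultimately show ?thesis
    by (simp only:)
qed

lemma AE_Reveal_imp_eventually_feasibly_reveals:
  fixes \<delta> :: "('q::finite,'a::finite,'e::finite) memdp"
  assumes "0 < pmf b e" and "is_run_measure \<delta> e \<sigma> q M"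
  shows "AE \<omega> in M. \<omega> \<in> Reveal \<delta> fb n b e' e q \<longrightarrow> (\<exists>K. feasibly_reveals \<delta> e' e n q (stake K \<omega>))"
  using AE_run_path_prob_pos[OF assms(2)]
proof (rule eventually_mono, intro impI)
  fix \<omega>
  assume pos: "\<forall>k. 0 < path_prob \<delta> e \<sigma> q [] q (stake k \<omega>)"
    and reveal: "\<omega> \<in> Reveal \<delta> fb n b e' e q"
  from reveal obtain k where k: "n \<le> nb_rev \<delta> e' e q (stake k \<omega>)" "lk \<delta> fb (pmf b) q (stake k \<omega>) e' \<noteq> 0"
    unfolding Reveal_def by blast
  have "feasible \<delta> e q (stake k \<omega>)"
    using pos by (intro feasible_if_path_prob_pos) blast
  then have "pmf b e' \<noteq> 0 \<and> feasible \<delta> e' q (stake k \<omega>)"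
    by (intro lk_nonzero_imp_feasible[where \<beta> = "pmf b" and e = e]) (use assms(1) k(2) in auto)
  then have "feasibly_reveals \<delta> e' e n q (stake k \<omega>)"
    using k(1) unfolding feasibly_reveals_def by (intro exI[of _ k]) simp
  then show "\<exists>K. feasibly_reveals \<delta> e' e n q (stake K \<omega>)" ..
qed

theorem mainTheorem17:
  fixes \<delta> :: "('q::finite, 'a::finite, 'e::finite) memdp"
    and fb :: "('e \<Rightarrow> real) \<Rightarrow> 'q \<Rightarrow> 'a \<Rightarrow> 'q \<Rightarrow> 'e pmf"
    and b :: "'e pmf" and e e' :: 'e and n :: nat and q :: 'q
    and \<sigma> :: "('q, 'a) strategy" and M :: "('a \<times> 'q) stream measure"
  assumes "e \<noteq> e'"
    and "pmf b e > 0"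
    and "is_run_measure \<delta> e \<sigma> q M"
  shows "measure M (Reveal \<delta> fb n b e' e q) \<le> (1 - p_min \<delta>) ^ n"
proof -
  interpret prob_space M
    using assms(3) by (simp add: is_run_measure_def)
  let ?E = "{\<omega>. \<exists>K. feasibly_reveals \<delta> e' e n q (stake K \<omega>)}"
  have "(\<Union>K. {\<omega>. feasibly_reveals \<delta> e' e n q (stake K \<omega>)}) \<in> sets M"
    using run_measure_stake_event_sets[OF assms(3)] by (intro sets.countable_UN) auto
  then have "?E \<in> sets M"
    by (simp only: Collect_ex_eq)
  moreover have "AE \<omega> in M. \<omega> \<in> Reveal \<delta> fb n b e' e q \<longrightarrow> \<omega> \<in> ?E"
    using AE_Reveal_imp_eventually_feasibly_reveals[OF assms(2,3)] by simp
  ultimately have "measure M (Reveal \<delta> fb n b e' e q) \<le> measure M ?E"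
    by (intro finite_measure_mono_AE)
  also have "\<dots> \<le> (1 - p_min \<delta>) ^ n"
    using assms(3) by (rule measure_eventually_feasibly_reveals_le)
  finally show ?thesis .
qed

end
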